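(* Let $\alpha$ be a nonzero real number and let $\gamma(t)=\Psi(u(t),v(t))$ be a regular curve in $\mathbb H^2$ not passing through $N$. Then $\gamma$ is an $\alpha$-stationary curve if and only if $$\kappa=\alpha\,\frac{\langle \mathbf n,\xi\rangle_\epsilon}{\mathsf d}$$ along $\gamma$. Here $\mathbf n$ is the unit normal of $\gamma$, $\mathsf d$ is the hyperbolic distance from $\gamma(t)$ to $N$, and $\xi$ is the unit tangent vector at $\gamma(t)$ of the ray from $N$ through $\gamma(t)$.
   Context: Let $\langle x,y\rangle_\epsilon=x_1y_1+x_2y_2-x_3y_3$ be the Lorentzian inner product on $\mathbb R^3$ and $|x|_\epsilon=\sqrt{|\langle x,x\rangle_\epsilon|}$. The hyperbolic plane is $\mathbb H^2=\{(x,y,z):x^2+y^2-z^2=-1,\ z>0\}$ with the induced metric. It is parametrized by $\Psi(u,v)=(\sinh u\cos v,\sinh u\sin v,\cosh u)$. Let $N=(0,0,1)$. The hyperbolic distance from $\Psi(u,v)$ ($u\ge0$) to $N$ is $u$. Rays from $N$ are the geodesics $u\mapsto\Psi(u,v_0)$, $u>0$. For $p=\Psi(u,v)\neq N$, set $\xi(p)=\Psi_u(u,v)=(\cosh u\cos v,\cosh u\sin v,\sinh u)$; this is the unit tangent of the ray through $p$, pointing away from $N$. For a regular curve $\gamma(t)=\Psi(u(t),v(t))$ with $u>0$, we have $|\gamma'|_\epsilon=\sqrt{u'^2+\sinh^2(u)v'^2}$. Its unit normal is $$\mathbf n=\frac{1}{|\gamma'|_\epsilon}\big(u'\sin v+\sinh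 u\cosh u\,v'\cos v,\ \sinh u\cosh u\,v'\sin v-u'\cos v,\ \sinh^2(u)\,v'\big).$$ Its curvature is $\kappa=\langle\gamma'',\mathbf n\rangle_\epsilon/|\gamma'|_\epsilon^2$. The energy of $\gamma$ is $$E_\alpha[\gamma]=\int_\gamma\mathsf d^\alpha\,ds=\int u^\alpha\sqrt{u'^2+\sinh^2(u)v'^2}\,dt.$$ An $\alpha$-stationary curve is a critical point of $E_\alpha$, i.e. $(u,v)$ satisfies its Euler–Lagrange equations. Throughout the paper, $\alpha\ne0$ and curves avoid $N$. *)

theory Defs
  imports "HOL-Analysis.Analysis"
begin

definition lor :: "real^3 \<Rightarrow> real^3 \<Rightarrow> real" where
  "lor x y = x$1 * y$1 + x$2 * y$2 - x$3 * y$3"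

definition Psi :: "real \<Rightarrow> real \<Rightarrow> real^3" where
  "Psi u v = vector [sinh u * cos v, sinh u * sin v, cosh u]"

text \<open>xi = Psi_u: unit tangent of the ray from N through Psi(u,v).\<close>
definition xi :: "real \<Rightarrow> real \<Rightarrow> real^3" where
  "xi u v = vector [cosh u * cos v, cosh u * sin v, sinh u]"

definition curve :: "(real \<Rightarrow> real) \<Rightarrow> (real \<Rightarrow> real) \<Rightarrow> real \<Rightarrow> real^3" where
  "curve u v t = Psi (u t) (v t)"

definition speed :: "(real \<Rightarrow> real) \<Rightarrow> (real \<Rightarrow> real) \<Rightarrow> real \<Rightarrow> real" where
  "speed u v t = sqrt ((deriv u t)^2 + (sinh (u t))^2 * (deriv v t)^2)"

definition unormal :: "(real \<Rightarrow> real) \<Rightarrow> (real \<Rightarrow> real) \<Rightarrow> real \<Rightarrow> real^3" where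
  "unormal u v t = (1 / speed u v t) *\<^sub>R
     vector [deriv u t * sin (v t) + sinh (u t) * cosh (u t) * deriv v t * cos (v t),
             sinh (u t) * cosh (u t) * deriv v t * sin (v t) - deriv u t * cos (v t),
             (sinh (u t))^2 * deriv v t]"

definition curvature :: "(real \<Rightarrow> real) \<Rightarrow> (real \<Rightarrow> real) \<Rightarrow> real \<Rightarrow> real" where
  "curvature u v t =
     lor (vector_derivative (\<lambda>s. vector_derivative (curve u v) (at s)) (at t)) (unormal u v t)
       / (speed u v t)^2"

text \<open>Euler--Lagrange equations of E_alpha = int u^alpha sqrt(u'^2 + sinh^2(u) v'^2) dt,
  holding at every parameter in I.\<close>
definition alpha_stationary ::
  "real \<Rightarrow> (real \<Rightarrow> real) \<Rightarrow> (real \<Rightarrow> real) \<Rightarrow> real set \<Rightarrow> bool" where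
  "alpha_stationary \<alpha> u v I \<longleftrightarrow> (\<forall>t\<in>I.
     deriv (\<lambda>s. u s powr \<alpha> * deriv u s / speed u v s) t
       = \<alpha> * u t powr (\<alpha> - 1) * speed u v t
         + u t powr \<alpha> * sinh (u t) * cosh (u t) * (deriv v t)^2 / speed u v t
   \<and> deriv (\<lambda>s. u s powr \<alpha> * (sinh (u s))^2 * deriv v s / speed u v s) t = 0)"

end

theory Submission
  imports Defs
begin

text \<open>Both Euler--Lagrange expressions of \<open>E\<^sub>\<alpha>\<close> are pointwise multiples of the single scalar
  \<open>\<delta> = \<kappa> - \<alpha> \<langle>n, \<xi>\<rangle>\<^sub>\<epsilon> / u\<close>: the residual of the \<open>u\<close>-equation is \<open>u\<^sup>\<alpha> sinh u \<cdot> v' \<cdot> \<delta>\<close> and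
  the \<open>v\<close>-equation reads \<open>-u\<^sup>\<alpha> sinh u \<cdot> u' \<cdot> \<delta>\<close>, i.e. \<open>u\<^sup>\<alpha> \<delta>\<close> times the coordinates
  \<open>(sinh u \<cdot> v', -u')\<close> of the normal direction. On a regular curve these never vanish together and
  \<open>u\<^sup>\<alpha> sinh u > 0\<close>, so both equations hold iff \<open>\<delta> = 0\<close>.\<close>

definition stationarity_defect :: "real \<Rightarrow> (real \<Rightarrow> real) \<Rightarrow> (real \<Rightarrow> real) \<Rightarrow> real \<Rightarrow> real" where
  "stationarity_defect \<alpha> u v t = curvature u v t - \<alpha> * lor (unormal u v t) (xi (u t) (v t)) / u t"

lemma lor_scaleR_left: "lor (r *\<^sub>R x) y = r * lor x y"
  and lor_scaleR_right: "lor x (r *\<^sub>R y) = r * lor x y"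
  by (simp_all add: lor_def algebra_simps)

lemma has_vector_derivative_vector3:
  assumes "(f1 has_real_derivative d1) (at x within S)" "(f2 has_real_derivative d2) (at x within S)"
    and "(f3 has_real_derivative d3) (at x within S)"
  shows "((\<lambda>s. vector [f1 s, f2 s, f3 s] :: real^3) has_vector_derivative vector [d1, d2, d3])
           (at x within S)"
proof -
  define e1 e2 e3 :: "real^3"
    where "e1 = vector [1, 0, 0]" and "e2 = vector [0, 1, 0]" and "e3 = vector [0, 0, 1]"
  have split: "vector [a, b, c] = a *\<^sub>R e1 + b *\<^sub>R e2 + c *\<^sub>R e3" for a b c :: real
    by (simp add: e1_def e2_def e3_def vec_eq_iff forall_3)
  show ?thesis
    unfolding split by (rule derivative_eq_intros assms has_vector_derivative_const refl)+ simp
qed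

lemma curve_has_vector_derivative:
  assumes "(u has_real_derivative u') (at t)" "(v has_real_derivative v') (at t)"
  shows "(curve u v has_vector_derivative
           vector [cosh (u t) * u' * cos (v t) - sinh (u t) * v' * sin (v t),
                   cosh (u t) * u' * sin (v t) + sinh (u t) * v' * cos (v t),
                   sinh (u t) * u']) (at t)"
  unfolding curve_def Psi_def
  by (rule has_vector_derivative_vector3; (rule derivative_eq_intros assms refl)+; simp add: algebra_simps)

lemma lor_unormal_xi: "lor (unormal u v t) (xi (u t) (v t)) = sinh (u t) * deriv v t / speed u v t"
proof -
  have "lor (unormal u v t) (xi (u t) (v t)) = (1 / speed u v t) * (sinh (u t) * deriv v t
      * (cosh (u t)^2 * (cos (v t)^2 + sin (v t)^2) - sinh (u t)^2))"
    unfolding unormal_def lor_scaleR_left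
    by (rule arg_cong[where f = "(*) _"]) (simp only: lor_def xi_def vector_3; algebra)
  then show ?thesis
    by (simp add: hyperbolic_pythagoras)
qed

context
  fixes u v :: "real \<Rightarrow> real" and I :: "real set"
  assumes open_I: "open I"
    and u_twice_differentiable: "\<forall>t\<in>I. u differentiable (at t) \<and> deriv u differentiable (at t)"
    and v_twice_differentiable: "\<forall>t\<in>I. v differentiable (at t) \<and> deriv v differentiable (at t)"
begin

lemma has_real_derivative_deriv_uv:
  assumes "t \<in> I"
  shows "(u has_real_derivative deriv u t) (at t)" "(deriv u has_real_derivative deriv (deriv u) t) (at t)"
    and "(v has_real_derivative deriv v t) (at t)" "(deriv v has_real_derivative deriv (deriv v) t) (at t)"
  using assms u_twice_differentiable v_twice_differentiable
  by (simp_all add: DERIV_deriv_iff_real_differentiable)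

lemma curvature_eq:
  assumes t: "t \<in> I"
  shows "curvature u v t =
    (sinh (u t) * deriv v t * (deriv (deriv u) t - sinh (u t) * cosh (u t) * (deriv v t)^2)
      - deriv u t * (2 * cosh (u t) * deriv u t * deriv v t + sinh (u t) * deriv (deriv v) t))
    / speed u v t ^ 3"
proof -
  define velocity :: "real \<Rightarrow> real^3" where "velocity s =
    vector [cosh (u s) * deriv u s * cos (v s) - sinh (u s) * deriv v s * sin (v s),
            cosh (u s) * deriv u s * sin (v s) + sinh (u s) * deriv v s * cos (v s),
            sinh (u s) * deriv u s]" for s
  define u1 u2 v1 v2 S C c s
    where "u1 = deriv u t" and "u2 = deriv (deriv u) t" and "v1 = deriv v t" and "v2 = deriv (deriv v) t"
      and "S = sinh (u t)" and "C = cosh (u t)" and "c = cos (v t)" and "s = sin (v t)"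
  define P Q where "P = S * u1^2 + C * u2 - S * v1^2" and "Q = 2 * C * u1 * v1 + S * v2"
  have "vector_derivative (curve u v) (at r) = velocity r" if "r \<in> I" for r
    unfolding velocity_def
    by (rule vector_derivative_at, rule curve_has_vector_derivative)
      (simp_all add: has_real_derivative_deriv_uv that)
  moreover have "(velocity has_vector_derivative vector [P * c - Q * s, P * s + Q * c, C * u1^2 + S * u2]) (at t)"
    unfolding velocity_def
    by (rule has_vector_derivative_vector3;
        (rule derivative_eq_intros has_real_derivative_deriv_uv[OF t] refl)+)
      (simp_all add: P_def Q_def S_def C_def c_def s_def u1_def v1_def u2_def v2_def, algebra+)
  ultimately have "vector_derivative (\<lambda>r. vector_derivative (curve u v) (at r)) (at t)
      = vector [P * c - Q * s, P * s + Q * c, C * u1^2 + S * u2]"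
    by (metis (no_types, lifting) vector_derivative_at has_vector_derivative_transform_within_open[OF _ open_I t])
  moreover have "lor (vector [P * c - Q * s, P * s + Q * c, C * u1^2 + S * u2])
      (vector [u1 * s + S * C * v1 * c, S * C * v1 * s - u1 * c, S^2 * v1])
    = S * v1 * (u2 - S * C * v1^2) - u1 * (2 * C * u1 * v1 + S * v2)"
  proof -
    have "c^2 + s^2 = 1" "C^2 - S^2 = 1"
      by (simp_all add: c_def s_def C_def S_def hyperbolic_pythagoras add.commute)
    then show ?thesis
      unfolding lor_def vector_3 P_def Q_def by algebra
  qed
  ultimately show ?thesis
    unfolding curvature_def unormal_def lor_scaleR_right
    unfolding u1_def[symmetric] u2_def[symmetric] v1_def[symmetric] v2_def[symmetric]
      S_def[symmetric] C_def[symmetric] c_def[symmetric] s_def[symmetric]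
    by (simp add: power2_eq_square power3_eq_cube)
qed

lemma speed_has_real_derivative:
  assumes t: "t \<in> I" and "speed u v t > 0"
  shows "(speed u v has_real_derivative
    (deriv u t * deriv (deriv u) t + sinh (u t) * cosh (u t) * deriv u t * (deriv v t)^2
      + (sinh (u t))^2 * deriv v t * deriv (deriv v) t) / speed u v t) (at t)"
proof -
  have Q_deriv: "((\<lambda>s. (deriv u s)^2 + (sinh (u s))^2 * (deriv v s)^2) has_real_derivative
      2 * (deriv u t * deriv (deriv u) t + sinh (u t) * cosh (u t) * deriv u t * (deriv v t)^2
        + (sinh (u t))^2 * deriv v t * deriv (deriv v) t)) (at t)"
    by (rule derivative_eq_intros has_real_derivative_deriv_uv[OF t] refl)+
      (simp add: algebra_simps power2_eq_square)
  have Q_pos: "(deriv u t)^2 + (sinh (u t))^2 * (deriv v t)^2 > 0"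
    using assms(2) unfolding speed_def by simp
  show ?thesis
    unfolding speed_def using DERIV_chain2[OF DERIV_real_sqrt[OF Q_pos] Q_deriv]
    by (rule DERIV_cong) (simp add: divide_simps)
qed

lemma Euler_Lagrange_residuals:
  assumes t: "t \<in> I" and u_pos: "u t > 0" and speed_pos: "speed u v t > 0"
  shows "deriv (\<lambda>s. u s powr \<alpha> * deriv u s / speed u v s) t
    = \<alpha> * u t powr (\<alpha> - 1) * speed u v t
      + u t powr \<alpha> * sinh (u t) * cosh (u t) * (deriv v t)^2 / speed u v t
      + u t powr \<alpha> * sinh (u t) * deriv v t * stationarity_defect \<alpha> u v t"
    and "deriv (\<lambda>s. u s powr \<alpha> * (sinh (u s))^2 * deriv v s / speed u v s) t
    = - (u t powr \<alpha> * sinh (u t) * deriv u t * stationarity_defect \<alpha> u v t)"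
proof -
  define u1 u2 v1 v2 S C \<sigma> \<sigma>' p
    where "u1 = deriv u t" and "u2 = deriv (deriv u) t" and "v1 = deriv v t" and "v2 = deriv (deriv v) t"
      and "S = sinh (u t)" and "C = cosh (u t)" and "\<sigma> = speed u v t"
      and "\<sigma>' = (u1 * u2 + S * C * u1 * v1^2 + S^2 * v1 * v2) / \<sigma>" and "p = u t powr \<alpha>"
  note jet_defs = u1_def u2_def v1_def v2_def S_def C_def \<sigma>_def p_def
  have powr_pred: "u t powr (\<alpha> - 1) = p / u t"
    using u_pos by (simp add: p_def powr_diff)
  have \<sigma>: "\<sigma>^2 = u1^2 + S^2 * v1^2" "\<sigma> > 0"
    using speed_pos by (simp_all add: \<sigma>_def speed_def u1_def v1_def S_def)
  have defect: "stationarity_defect \<alpha> u v t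
      = (S * v1 * (u2 - S * C * v1^2) - u1 * (2 * C * u1 * v1 + S * v2)) / \<sigma>^3 - \<alpha> * (S * v1 / \<sigma>) / u t"
    unfolding stationarity_defect_def curvature_eq[OF t] lor_unormal_xi jet_defs ..
  have "deriv (\<lambda>s. u s powr \<alpha> * deriv u s / speed u v s) t
      = ((\<alpha> * (p / u t) * u1 * u1 + u2 * p) * \<sigma> - p * u1 * \<sigma>') / (\<sigma> * \<sigma>)"
    by (rule DERIV_imp_deriv, (rule derivative_eq_intros has_real_derivative_deriv_uv[OF t]
          speed_has_real_derivative[OF t speed_pos] refl u_pos)+)
      (use speed_pos in \<open>simp_all add: powr_pred \<sigma>'_def jet_defs\<close>)
  then show "deriv (\<lambda>s. u s powr \<alpha> * deriv u s / speed u v s) t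
    = \<alpha> * u t powr (\<alpha> - 1) * speed u v t
      + u t powr \<alpha> * sinh (u t) * cosh (u t) * (deriv v t)^2 / speed u v t
      + u t powr \<alpha> * sinh (u t) * deriv v t * stationarity_defect \<alpha> u v t"
    using \<sigma> u_pos unfolding defect powr_pred jet_defs[symmetric] \<sigma>'_def
    by (simp add: field_simps) algebra
  have "deriv (\<lambda>s. u s powr \<alpha> * (sinh (u s))^2 * deriv v s / speed u v s) t
      = ((\<alpha> * (p / u t) * u1 * S^2 * v1 + p * (2 * S * C * u1) * v1 + p * S^2 * v2) * \<sigma>
        - p * S^2 * v1 * \<sigma>') / (\<sigma> * \<sigma>)"
    by (rule DERIV_imp_deriv, (rule derivative_eq_intros has_real_derivative_deriv_uv[OF t]
          speed_has_real_derivative[OF t speed_pos] refl u_pos)+)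
      (use speed_pos in \<open>simp_all add: powr_pred \<sigma>'_def jet_defs algebra_simps\<close>)
  then show "deriv (\<lambda>s. u s powr \<alpha> * (sinh (u s))^2 * deriv v s / speed u v s) t
    = - (u t powr \<alpha> * sinh (u t) * deriv u t * stationarity_defect \<alpha> u v t)"
    using \<sigma> u_pos unfolding defect jet_defs[symmetric] \<sigma>'_def
    by (simp add: field_simps) algebra
qed

end

theorem proposition2p2:
  fixes \<alpha> :: real and u v :: "real \<Rightarrow> real" and I :: "real set"
  assumes "\<alpha> \<noteq> 0"
    and "open I" and "I \<noteq> {}"
    and "\<forall>t\<in>I. u differentiable (at t) \<and> deriv u differentiable (at t)"
    and "\<forall>t\<in>I. v differentiable (at t) \<and> deriv v differentiable (at t)"
    and "\<forall>t\<in>I. u t > 0"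
    and "\<forall>t\<in>I. (deriv u t)^2 + (sinh (u t))^2 * (deriv v t)^2 > 0"
  shows "alpha_stationary \<alpha> u v I \<longleftrightarrow>
    (\<forall>t\<in>I. curvature u v t = \<alpha> * lor (unormal u v t) (xi (u t) (v t)) / u t)"
proof -
  have "(deriv (\<lambda>s. u s powr \<alpha> * deriv u s / speed u v s) t
          = \<alpha> * u t powr (\<alpha> - 1) * speed u v t
            + u t powr \<alpha> * sinh (u t) * cosh (u t) * (deriv v t)^2 / speed u v t
        \<and> deriv (\<lambda>s. u s powr \<alpha> * (sinh (u s))^2 * deriv v s / speed u v s) t = 0)
      \<longleftrightarrow> stationarity_defect \<alpha> u v t = 0" if t: "t \<in> I" for t
  proof -
    have u_pos: "u t > 0" and regular: "(deriv u t)^2 + (sinh (u t))^2 * (deriv v t)^2 > 0"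
      using assms(6,7) t by auto
    then have "speed u v t > 0"
      unfolding speed_def by simp
    note residuals = Euler_Lagrange_residuals[OF assms(2,4,5) t u_pos this, of \<alpha>]
    have "u t powr \<alpha> \<noteq> 0" "sinh (u t) \<noteq> 0"
      using u_pos by simp_all
    moreover have "deriv u t \<noteq> 0 \<or> deriv v t \<noteq> 0"
      using regular by auto
    ultimately show ?thesis
      by (simp only: residuals add_cancel_left_right neg_equal_0_iff_equal mult_eq_0_iff) blast
  qed
  then show ?thesis
    unfolding alpha_stationary_def stationarity_defect_def by auto
qed

end
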